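(* Let $\Sigma$ be a finite set of formulas. In $\mathcal M^{\mathsf{CS4}}_\Sigma$, every chain $\Gamma_0\prec_\Sigma\Gamma_1\prec_\Sigma\cdots\prec_\Sigma\Gamma_n$ satisfies $n\le|\Sigma|$ (so has length at most $|\Sigma|+1$); moreover $\sqsubseteq_c$ is backward confluent with respect to $\preccurlyeq_\Sigma$: whenever $\Phi\sqsubseteq_c\Psi\preccurlyeq_\Sigma\Theta$, there is $\Upsilon\in W_c$ with $\Phi\preccurlyeq_\Sigma\Upsilon\sqsubseteq_c\Theta$.
   Context: Formulas over a countably infinite set $\mathbb P$: $p\mid\bot\mid\varphi\wedge\psi\mid\varphi\vee\psi\mid\varphi\to\psi\mid\Diamond\varphi\mid\Box\varphi$; $\mathcal L$ is the set of all formulas. $\mathsf{CS4}$ is the least set of formulas containing all intuitionistic propositional tautologies and all instances of $\Box(\varphi\to\psi)\to(\Box\varphi\to\Box\psi)$, $\Box(\varphi\to\psi)\to(\Diamond\varphi\to\Diamond\psi)$, $\Box\varphi\to\varphi$, $\varphi\to\Diamond\varphi$, $\Box\varphi\to\Box\Box\varphi$, $\Diamond\Diamond\varphi\to\Diamond\varphi$, closed under modus ponens and necessitation. $\Gamma\vdash\Delta$ means $\mathsf{CS4}\vdash\bigwedge\Gamma'\to\bigvee\Delta'$ for finite $\Gamma'\subseteq\Gamma$, $\Delta'\subseteq\Delta$. A set $X$ is prime if $X\vdash\varphi$ implies $\varphi\in X$ and $\varphi\vee\psi\in X$ implies $\varphi\in X$ or $\psi\in X$. A $\mathsf{CS4}$-theory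 is a pair $\Phi=(\Phi^+;\Phi^\Diamond)$ with $\Phi^+$ prime and $\Diamond\bigvee\Psi\notin\Phi^+$ for every nonempty finite $\Psi\subseteq\Phi^\Diamond$. $\Phi^\Box=\{\varphi:\Box\varphi\in\Phi^+\}$. $W_c$ = all $\mathsf{CS4}$-theories; $W_{\bot c}=\{(\mathcal L;\varnothing)\}$; $\Phi\preccurlyeq_c\Psi$ iff $\Phi^+\subseteq\Psi^+$; $\Phi\sqsubseteq_c\Psi$ iff $\Phi^\Box\subseteq\Psi^+$ and $\Phi^\Diamond\subseteq\Psi^\Diamond$; $V_c(p)=\{\Phi:p\in\Phi^+\}$. For $\Gamma,\Delta\in W_c$, $\Gamma\preccurlyeq_\Sigma\Delta$ iff $\Gamma\preccurlyeq_c\Delta$ and either $\Gamma^+=\Delta^+$ or there is $\chi\in\Sigma$ with $\chi\in\Delta^+\setminus\Gamma^+$; $\Gamma\prec_\Sigma\Delta$ means $\Gamma\preccurlyeq_\Sigma\Delta$ and not $\Delta\preccurlyeq_\Sigma\Gamma$. $\mathcal M^{\mathsf{CS4}}_\Sigma=(W_c,W_{\bot c},\preccurlyeq_\Sigma,\sqsubseteq_c,V_c)$. *)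

theory Defs
  imports Main
begin

datatype fm =
    Atom nat
  | Bot
  | And fm fm
  | Or fm fm
  | Imp fm fm
  | Dia fm
  | Box fm

definition Top :: fm where "Top = Imp Bot Bot"

text \<open>CS4: intuitionistic propositional logic (Hilbert axiom schemes over all
  modal formulas, which together with modus ponens yield exactly all instances
  of intuitionistic tautologies) plus the modal axioms, closed under MP and
  necessitation.\<close>
inductive CS4 :: "fm \<Rightarrow> bool" where
  ax_K: "CS4 (Imp p (Imp q p))"
| ax_S: "CS4 (Imp (Imp p (Imp q r)) (Imp (Imp p q) (Imp p r)))"
| ax_andE1: "CS4 (Imp (And p q) p)"
| ax_andE2: "CS4 (Imp (And p q) q)"
| ax_andI: "CS4 (Imp p (Imp q (And p q)))"
| ax_orI1: "CS4 (Imp p (Or p q))"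
| ax_orI2: "CS4 (Imp q (Or p q))"
| ax_orE: "CS4 (Imp (Imp p r) (Imp (Imp q r) (Imp (Or p q) r)))"
| ax_bot: "CS4 (Imp Bot p)"
| ax_boxK: "CS4 (Imp (Box (Imp p q)) (Imp (Box p) (Box q)))"
| ax_diaK: "CS4 (Imp (Box (Imp p q)) (Imp (Dia p) (Dia q)))"
| ax_T: "CS4 (Imp (Box p) p)"
| ax_diaT: "CS4 (Imp p (Dia p))"
| ax_4: "CS4 (Imp (Box p) (Box (Box p)))"
| ax_dia4: "CS4 (Imp (Dia (Dia p)) (Dia p))"
| mp: "CS4 (Imp p q) \<Longrightarrow> CS4 p \<Longrightarrow> CS4 q"
| nec: "CS4 p \<Longrightarrow> CS4 (Box p)"

fun conj :: "fm list \<Rightarrow> fm" where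
  "conj [] = Top"
| "conj [x] = x"
| "conj (x # xs) = And x (conj xs)"

fun disj :: "fm list \<Rightarrow> fm" where
  "disj [] = Bot"
| "disj [x] = x"
| "disj (x # xs) = Or x (disj xs)"

definition derives :: "fm set \<Rightarrow> fm set \<Rightarrow> bool" where
  "derives \<Gamma> \<Delta> \<longleftrightarrow> (\<exists>gs ds. set gs \<subseteq> \<Gamma> \<and> set ds \<subseteq> \<Delta> \<and> CS4 (Imp (conj gs) (disj ds)))"

definition prime_set :: "fm set \<Rightarrow> bool" where
  "prime_set X \<longleftrightarrow> (\<forall>\<phi>. derives X {\<phi>} \<longrightarrow> \<phi> \<in> X) \<and>
                   (\<forall>\<phi> \<psi>. Or \<phi> \<psi> \<in> X \<longrightarrow> \<phi> \<in> X \<or> \<psi> \<in> X)"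

text \<open>A CS4-theory Phi = (Phi-plus; Phi-dia) is a pair (fst, snd).\<close>
type_synonym theory_c = "fm set \<times> fm set"

definition is_theory :: "theory_c \<Rightarrow> bool" where
  "is_theory \<Phi> \<longleftrightarrow> prime_set (fst \<Phi>) \<and>
     (\<forall>ps. ps \<noteq> [] \<longrightarrow> set ps \<subseteq> snd \<Phi> \<longrightarrow> Dia (disj ps) \<notin> fst \<Phi>)"

definition Wc :: "theory_c set" where
  "Wc = {\<Phi>. is_theory \<Phi>}"

definition Wbotc :: "theory_c set" where
  "Wbotc = {(UNIV, {})}"

definition boxset :: "theory_c \<Rightarrow> fm set" where
  "boxset \<Phi> = {\<phi>. Box \<phi> \<in> fst \<Phi>}"

definition preceq_c :: "theory_c \<Rightarrow> theory_c \<Rightarrow> bool" where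
  "preceq_c \<Phi> \<Psi> \<longleftrightarrow> fst \<Phi> \<subseteq> fst \<Psi>"

definition sqsub_c :: "theory_c \<Rightarrow> theory_c \<Rightarrow> bool" where
  "sqsub_c \<Phi> \<Psi> \<longleftrightarrow> boxset \<Phi> \<subseteq> fst \<Psi> \<and> snd \<Phi> \<subseteq> snd \<Psi>"

definition Vc :: "nat \<Rightarrow> theory_c set" where
  "Vc p = {\<Phi>. Atom p \<in> fst \<Phi>}"

definition preceq_S :: "fm set \<Rightarrow> theory_c \<Rightarrow> theory_c \<Rightarrow> bool" where
  "preceq_S \<Sigma> \<Gamma> \<Delta> \<longleftrightarrow> preceq_c \<Gamma> \<Delta> \<and>
     (fst \<Gamma> = fst \<Delta> \<or> (\<exists>\<chi>\<in>\<Sigma>. \<chi> \<in> fst \<Delta> \<and> \<chi> \<notin> fst \<Gamma>))"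

definition prec_S :: "fm set \<Rightarrow> theory_c \<Rightarrow> theory_c \<Rightarrow> bool" where
  "prec_S \<Sigma> \<Gamma> \<Delta> \<longleftrightarrow> preceq_S \<Sigma> \<Gamma> \<Delta> \<and> \<not> preceq_S \<Sigma> \<Delta> \<Gamma>"

end

theory Submission
  imports Defs
begin

text \<open>A strict \<open>\<prec>\<^sub>\<Sigma>\<close>-step adds a new formula of \<open>\<Sigma>\<close> to the positive part, so along a
  chain the sets \<open>\<Sigma> \<inter> \<Gamma>\<^sub>i\<^sup>+\<close> grow strictly and there can be at most \<open>|\<Sigma>|\<close> steps.
  For backward confluence, forgetting the diamond part of \<open>\<Phi>\<close> gives a theory
  \<open>(\<Phi>\<^sup>+; \<emptyset>)\<close> with the same positive part as \<open>\<Phi>\<close>, whose boxed formulas lie in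
  \<open>\<Psi>\<^sup>+ \<subseteq> \<Theta>\<^sup>+\<close>.\<close>

lemma prec_S_Int_psubset:
  assumes "prec_S \<Sigma> A B"
  shows "\<Sigma> \<inter> fst A \<subset> \<Sigma> \<inter> fst B"
proof -
  have sub: "fst A \<subseteq> fst B" and ne: "fst A \<noteq> fst B"
    using assms by (auto simp: prec_S_def preceq_S_def preceq_c_def)
  then obtain \<chi> where "\<chi> \<in> \<Sigma>" "\<chi> \<in> fst B" "\<chi> \<notin> fst A"
    using assms by (auto simp: prec_S_def preceq_S_def)
  with sub show ?thesis by blast
qed

lemma prec_S_chain_card_Int:
  assumes "finite \<Sigma>" and chain: "\<forall>i<n. prec_S \<Sigma> (\<Gamma> i) (\<Gamma> (Suc i))" and "m \<le> n"
  shows "m \<le> card (\<Sigma> \<inter> fst (\<Gamma> m))"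
  using \<open>m \<le> n\<close>
proof (induction m)
  case 0
  then show ?case by simp
next
  case (Suc m)
  have "\<Sigma> \<inter> fst (\<Gamma> m) \<subset> \<Sigma> \<inter> fst (\<Gamma> (Suc m))"
    using chain Suc.prems prec_S_Int_psubset by simp
  then have "card (\<Sigma> \<inter> fst (\<Gamma> m)) < card (\<Sigma> \<inter> fst (\<Gamma> (Suc m)))"
    using \<open>finite \<Sigma>\<close> by (simp add: psubset_card_mono)
  with Suc show ?case by simp
qed

lemma prec_S_chain_length:
  assumes "finite \<Sigma>" and "\<forall>i<n. prec_S \<Sigma> (\<Gamma> i) (\<Gamma> (Suc i))"
  shows "n \<le> card \<Sigma>"
proof -
  have "n \<le> card (\<Sigma> \<inter> fst (\<Gamma> n))"
    using assms prec_S_chain_card_Int by blast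
  also have "\<dots> \<le> card \<Sigma>"
    using \<open>finite \<Sigma>\<close> by (simp add: card_mono)
  finally show ?thesis .
qed

lemma is_theory_empty_dia:
  assumes "is_theory \<Phi>"
  shows "is_theory (fst \<Phi>, {})"
  using assms by (simp add: is_theory_def)

lemma sqsub_c_backward_confluent:
  assumes "\<Phi> \<in> Wc" and "sqsub_c \<Phi> \<Psi>" and "preceq_c \<Psi> \<Theta>"
  shows "\<exists>\<Upsilon>\<in>Wc. preceq_S \<Sigma> \<Phi> \<Upsilon> \<and> sqsub_c \<Upsilon> \<Theta>"
proof
  let ?\<Upsilon> = "(fst \<Phi>, {} :: fm set)"
  show "?\<Upsilon> \<in> Wc"
    using assms(1) is_theory_empty_dia by (simp add: Wc_def)
  show "preceq_S \<Sigma> \<Phi> ?\<Upsilon> \<and> sqsub_c ?\<Upsilon> \<Theta>"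
    using assms(2,3) by (auto simp: preceq_S_def preceq_c_def sqsub_c_def boxset_def)
qed

theorem mainTheorem18:
  fixes \<Sigma> :: "fm set"
  assumes "finite \<Sigma>"
  shows "(\<forall>(\<Gamma> :: nat \<Rightarrow> theory_c) n.
            (\<forall>i\<le>n. \<Gamma> i \<in> Wc) \<longrightarrow> (\<forall>i<n. prec_S \<Sigma> (\<Gamma> i) (\<Gamma> (Suc i))) \<longrightarrow> n \<le> card \<Sigma>)
       \<and> (\<forall>\<Phi>\<in>Wc. \<forall>\<Psi>\<in>Wc. \<forall>\<Theta>\<in>Wc. sqsub_c \<Phi> \<Psi> \<and> preceq_S \<Sigma> \<Psi> \<Theta> \<longrightarrow>
            (\<exists>\<Upsilon>\<in>Wc. preceq_S \<Sigma> \<Phi> \<Upsilon> \<and> sqsub_c \<Upsilon> \<Theta>))"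
  using prec_S_chain_length[OF assms] sqsub_c_backward_confluent
  by (auto simp: preceq_S_def)

end
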